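(* Let $\zeta\in(0,\infty)$ and let $\mathbf d_n,\mathbf d^*_n$, $n\in\mathbb N$, be random variables with values in $\mathbf M([0,\zeta])$, and $\mathbf d$ a random variable in $\mathbf C([0,\zeta]^2,\mathbb R)$, such that: (i) $\mathbf d_n\to\mathbf d$ weakly on $(\mathbf C([0,\zeta]^2,\mathbb R),\lVert\cdot\rVert)$; (ii) for all $n\in\mathbb N$ and all $s,s'\in[0,\zeta]$, almost surely $\mathbf d^*_n(s,s')\le\mathbf d_n(s,s')$; (iii) for all $s,s'\in[0,\zeta]$, $|\mathbf d^*_n(s,s')-\mathbf d_n(s,s')|\to0$ in probability. Then $(\mathbf d^*_n,\mathbf d_n)\to(\mathbf d,\mathbf d)$ weakly on $(\mathbf C([0,\zeta]^2,\mathbb R),\lVert\cdot\rVert)^2$.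
   Context: $\mathbf C([0,\zeta]^2,\mathbb R)$: continuous real functions on $[0,\zeta]^2$ with uniform norm $\lVert\cdot\rVert$. $\mathbf M([0,\zeta])$: continuous pseudo-metrics on $[0,\zeta]$ (nonnegative, vanishing on the diagonal, symmetric, triangle inequality). *)

theory Defs
  imports "HOL-Analysis.Analysis" "HOL-Probability.Probability"
begin

text \<open>The metric space C([0,zeta]^2,R) with the uniform norm (functions are
  extensional, i.e. undefined outside the square).\<close>
definition Csq :: "real \<Rightarrow> (real \<times> real \<Rightarrow> real) metric" where
  "Csq zeta = cfunspace (top_of_set ({0..zeta} \<times> {0..zeta})) euclidean_metric"

definition Mps :: "real \<Rightarrow> (real \<times> real \<Rightarrow> real) set" where
  "Mps zeta = {d \<in> mspace (Csq zeta).
      (\<forall>s\<in>{0..zeta}. \<forall>t\<in>{0..zeta}. d (s,t) \<ge> 0 \<and> d (s,t) = d (t,s)) \<and>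
      (\<forall>s\<in>{0..zeta}. d (s,s) = 0) \<and>
      (\<forall>s\<in>{0..zeta}. \<forall>t\<in>{0..zeta}. \<forall>u\<in>{0..zeta}. d (s,u) \<le> d (s,t) + d (t,u))}"

definition borel_of_metric :: "'a metric \<Rightarrow> 'a measure" where
  "borel_of_metric m = sigma (mspace m) {U. openin (mtopology_of m) U}"

definition weak_conv_metric ::
  "'a metric \<Rightarrow> (nat \<Rightarrow> 'w measure) \<Rightarrow> (nat \<Rightarrow> 'w \<Rightarrow> 'a) \<Rightarrow> 'v measure \<Rightarrow> ('v \<Rightarrow> 'a) \<Rightarrow> bool"
  where
  "weak_conv_metric m M X N Y \<longleftrightarrow>
     (\<forall>f. continuous_map (mtopology_of m) euclideanreal f \<and> bounded (f ` mspace m) \<longrightarrow>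
        (\<lambda>n. \<integral>\<omega>. f (X n \<omega>) \<partial>(M n)) \<longlonglongrightarrow> (\<integral>\<omega>. f (Y \<omega>) \<partial>N))"

end

theory Submission
  imports Defs
begin

text \<open>Because d_n converges weakly and C([0,zeta]^2) is separable, a Slutsky-type argument
  reduces the claim to convergence in probability of the sup-distance between d*_n and d_n.
  Weak convergence to a continuous limit yields, with probability close to one, a uniform
  modulus near the diagonal: d_n(s,t) < c whenever |s - t| <= h. On that event, since
  d*_n <= d_n and both are pseudo-metrics, the triangle inequality bounds the sup-distance by
  5c as soon as d*_n and d_n differ by at most c on a finite h-net of [0,zeta], and on a
  finite net the pointwise convergence in probability applies.\<close>

lemma continuous_map_mtopology_of_realD:
  assumes "continuous_map (mtopology_of m) euclideanreal f" "a \<in> mspace m" "0 < e"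
  obtains \<delta> where "0 < \<delta>" "\<And>x. x \<in> mspace m \<Longrightarrow> mdist m a x < \<delta> \<Longrightarrow> \<bar>f x - f a\<bar> < e"
proof -
  interpret Metric_space "mspace m" "mdist m"
    by (rule Metric_space_mspace_mdist)
  have "continuous_map mtopology Met_TC.mtopology f"
    using assms(1) by (simp add: mtopology_of_def)
  then show ?thesis
    using assms(2,3) that
    unfolding metric_continuous_map[OF Met_TC.Metric_space_axioms]
    by (metis dist_real_def abs_minus_commute)
qed

lemma separable_space_mtopology_of_iff:
  "separable_space (mtopology_of m) \<longleftrightarrow>
     (\<exists>D. countable D \<and> D \<subseteq> mspace m \<and> (\<forall>x\<in>mspace m. \<forall>e>0. \<exists>a\<in>D. mdist m x a < e))"
proof -
  interpret Metric_space "mspace m" "mdist m"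
    by (rule Metric_space_mspace_mdist)
  have "mtopology closure_of D = mspace m \<longleftrightarrow> (\<forall>x\<in>mspace m. \<forall>e>0. \<exists>a\<in>D. mdist m x a < e)"
    if "D \<subseteq> mspace m" for D
  proof
    assume "mtopology closure_of D = mspace m"
    then show "\<forall>x\<in>mspace m. \<forall>e>0. \<exists>a\<in>D. mdist m x a < e"
      unfolding metric_closure_of set_eq_iff by auto
  next
    assume "\<forall>x\<in>mspace m. \<forall>e>0. \<exists>a\<in>D. mdist m x a < e"
    then show "mtopology closure_of D = mspace m"
      using that unfolding metric_closure_of by auto (meson subsetD)
  qed
  then show ?thesis
    by (auto simp: separable_space_def mtopology_of_def)
qed

lemma space_borel_of_metric [simp]: "space (borel_of_metric m) = mspace m"
  unfolding borel_of_metric_def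
  by (rule space_measure_of) (use openin_subset in fastforce)

lemma sets_borel_of_metric_openin:
  assumes "openin (mtopology_of m) U"
  shows "U \<in> sets (borel_of_metric m)"
proof -
  have "{U. openin (mtopology_of m) U} \<subseteq> Pow (mspace m)"
    using openin_subset by fastforce
  then show ?thesis
    using assms unfolding borel_of_metric_def by (simp add: sigma_sets.Basic)
qed

lemma measurable_borel_of_metricI:
  assumes "X \<in> space M \<rightarrow> mspace m"
    and "\<And>U. openin (mtopology_of m) U \<Longrightarrow> X -` U \<inter> space M \<in> sets M"
  shows "X \<in> measurable M (borel_of_metric m)"
  unfolding borel_of_metric_def
  by (rule measurable_measure_of) (use assms openin_subset in fastforce)+

lemma borel_of_metric_euclidean: "borel_of_metric euclidean_metric = borel"
  by (simp add: borel_of_metric_def borel_def)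

lemma measurable_borel_of_metric_continuous_map:
  assumes "continuous_map (mtopology_of m) (mtopology_of m') f"
  shows "f \<in> measurable (borel_of_metric m) (borel_of_metric m')"
proof (rule measurable_borel_of_metricI)
  show "f \<in> space (borel_of_metric m) \<rightarrow> mspace m'"
    using continuous_map_image_subset_topspace[OF assms] by auto
  fix U assume "openin (mtopology_of m') U"
  then have "openin (mtopology_of m) {x \<in> mspace m. f x \<in> U}"
    using assms by (simp add: continuous_map_def)
  moreover have "f -` U \<inter> space (borel_of_metric m) = {x \<in> mspace m. f x \<in> U}"
    by auto
  ultimately show "f -` U \<inter> space (borel_of_metric m) \<in> sets (borel_of_metric m)"
    by (simp add: sets_borel_of_metric_openin)
qed

lemma borel_measurable_continuous_map_comp:
  assumes "X \<in> measurable M (borel_of_metric m)"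
    and "continuous_map (mtopology_of m) euclideanreal f"
  shows "(\<lambda>\<omega>. f (X \<omega>)) \<in> borel_measurable M"
  using measurable_compose[OF assms(1) measurable_borel_of_metric_continuous_map[of m euclidean_metric f]]
    assms(2) by (simp add: borel_of_metric_euclidean)

lemma openin_prod_metric_Union_mballs:
  assumes "separable_space (mtopology_of m)" "openin (mtopology_of (prod_metric m m)) U"
  obtains I where "countable I" "U = (\<Union>(a, b, r)\<in>I. mball_of m a r \<times> mball_of m b r)"
proof -
  interpret Metric_space12 "mspace m" "mdist m" "mspace m" "mdist m"
    by (rule Metric_space12_mspace_mdist)
  obtain D where D: "countable D" "D \<subseteq> mspace m" "\<And>x e. x \<in> mspace m \<Longrightarrow> 0 < e \<Longrightarrow> \<exists>a\<in>D. mdist m x a < e"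
    using assms(1) unfolding separable_space_mtopology_of_iff by blast
  have U: "openin Prod_metric.mtopology U"
    using assms(2) unfolding mtopology_of_def by simp
  define I where "I = {(a, b, r). a \<in> D \<and> b \<in> D \<and> r \<in> \<rat> \<and> M1.mball a r \<times> M1.mball b r \<subseteq> U}"
  have "countable I"
    by (rule countable_subset[of _ "D \<times> D \<times> \<rat>"]) (auto simp: I_def D(1) countable_rat)
  moreover have "U = (\<Union>(a, b, r)\<in>I. M1.mball a r \<times> M1.mball b r)"
  proof (intro equalityI subsetI)
    fix z assume "z \<in> U"
    moreover have "U \<subseteq> mspace m \<times> mspace m"
      using U unfolding Prod_metric.openin_mtopology by blast
    ultimately obtain x y where z: "z = (x, y)" "x \<in> mspace m" "y \<in> mspace m"
      by blast
    obtain \<rho> where "\<rho> > 0" and \<rho>: "Prod_metric.mball (x, y) \<rho> \<subseteq> U"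
      using U \<open>z \<in> U\<close> z unfolding Prod_metric.openin_mtopology by blast
    obtain r where r: "r \<in> \<rat>" "0 < r" "r < \<rho>/4"
      using Rats_dense_in_real[of 0 "\<rho>/4"] \<open>\<rho> > 0\<close> by auto
    obtain a b where ab: "a \<in> D" "b \<in> D" "mdist m x a < r" "mdist m y b < r"
      using D(3)[OF z(2) r(2)] D(3)[OF z(3) r(2)] by blast
    have "M1.mball a r \<times> M1.mball b r \<subseteq> M1.mball x (2*r) \<times> M1.mball y (2*r)"
      using ab z D(2) by (intro Sigma_mono M1.mball_subset) (auto simp: M1.commute)
    also have "\<dots> \<subseteq> Prod_metric.mball (x, y) \<rho>"
      using mball_subset_prod_metric Prod_metric.mball_subset_concentric r(3) by fastforce
    finally have "(a, b, r) \<in> I"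
      using \<rho> ab r by (auto simp: I_def)
    moreover have "x \<in> M1.mball a r" "y \<in> M1.mball b r"
      using ab z D(2) by (auto simp: M1.commute)
    ultimately show "z \<in> (\<Union>(a, b, r)\<in>I. M1.mball a r \<times> M1.mball b r)"
      using z(1) by blast
  qed (auto simp: I_def)
  ultimately show ?thesis
    using that by (simp add: mball_of_def)
qed

lemma measurable_pair_borel_of_metric:
  assumes "separable_space (mtopology_of m)"
    and X: "X \<in> measurable M (borel_of_metric m)" and Y: "Y \<in> measurable M (borel_of_metric m)"
  shows "(\<lambda>\<omega>. (X \<omega>, Y \<omega>)) \<in> measurable M (borel_of_metric (prod_metric m m))"
proof (rule measurable_borel_of_metricI)
  have ball_sets: "Z -` mball_of m a r \<inter> space M \<in> sets M"
    if "Z \<in> measurable M (borel_of_metric m)" for Z a r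
    using measurable_sets[OF that sets_borel_of_metric_openin]
    by (simp add: mball_of_def mtopology_of_def Metric_space.openin_mball[OF Metric_space_mspace_mdist])
  show "(\<lambda>\<omega>. (X \<omega>, Y \<omega>)) \<in> space M \<rightarrow> mspace (prod_metric m m)"
    using measurable_space[OF X] measurable_space[OF Y] by auto
  fix U assume "openin (mtopology_of (prod_metric m m)) U"
  then obtain I where "countable I" and U: "U = (\<Union>(a, b, r)\<in>I. mball_of m a r \<times> mball_of m b r)"
    using openin_prod_metric_Union_mballs assms(1) by blast
  have "(\<lambda>\<omega>. (X \<omega>, Y \<omega>)) -` U \<inter> space M =
      (\<Union>(a, b, r)\<in>I. (X -` mball_of m a r \<inter> space M) \<inter> (Y -` mball_of m b r \<inter> space M))"
    unfolding U by auto
  then show "(\<lambda>\<omega>. (X \<omega>, Y \<omega>)) -` U \<inter> space M \<in> sets M"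
    using \<open>countable I\<close> ball_sets[OF X] ball_sets[OF Y] by (auto intro!: sets.countable_UN')
qed

lemma borel_measurable_continuous_pair:
  assumes "separable_space (mtopology_of m)"
    and "X \<in> measurable M (borel_of_metric m)" "Y \<in> measurable M (borel_of_metric m)"
    and "continuous_map (mtopology_of (prod_metric m m)) euclideanreal f"
  shows "(\<lambda>\<omega>. f (X \<omega>, Y \<omega>)) \<in> borel_measurable M"
  using borel_measurable_continuous_map_comp[OF measurable_pair_borel_of_metric[OF assms(1-3)] assms(4)] .

lemma integrable_continuous_pair:
  assumes "prob_space M" "separable_space (mtopology_of m)"
    and "X \<in> measurable M (borel_of_metric m)" "Y \<in> measurable M (borel_of_metric m)"
    and "continuous_map (mtopology_of (prod_metric m m)) euclideanreal f"
    and "bounded (f ` (mspace m \<times> mspace m))"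
  shows "integrable M (\<lambda>\<omega>. f (X \<omega>, Y \<omega>))"
proof -
  interpret prob_space M
    by fact
  obtain B where "\<And>z. z \<in> mspace m \<times> mspace m \<Longrightarrow> norm (f z) \<le> B"
    using assms(6) unfolding bounded_iff by blast
  then have "AE \<omega> in M. norm (f (X \<omega>, Y \<omega>)) \<le> B"
    using measurable_space[OF assms(3)] measurable_space[OF assms(4)] by (intro AE_I2) simp
  then show ?thesis
    using borel_measurable_continuous_pair[OF assms(2-5)] by (rule integrable_const_bound)
qed

section \<open>The space C([0,zeta]^2)\<close>

lemma Csq_mem:
  "f \<in> mspace (Csq zeta) \<longleftrightarrow>
     continuous_on ({0..zeta} \<times> {0..zeta}) f \<and> f \<in> extensional ({0..zeta} \<times> {0..zeta})"
proof -
  have "Met_TC.mbounded (f ` ({0..zeta} \<times> {0..zeta}))" if "continuous_on ({0..zeta} \<times> {0..zeta}) f"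
    using compact_continuous_image[OF that] compact_imp_bounded compact_Times by auto
  then show ?thesis
    by (auto simp: Csq_def continuous_map_iff_continuous)
qed

lemma Csq_dist_le:
  assumes "f \<in> mspace (Csq zeta)" "g \<in> mspace (Csq zeta)" "z \<in> {0..zeta} \<times> {0..zeta}"
  shows "\<bar>f z - g z\<bar> \<le> mdist (Csq zeta) f g"
proof -
  have "{0..zeta} \<times> {0..zeta} \<noteq> {}"
    using assms(3) by blast
  then show ?thesis
    using cfunspace_mdist_le[of f "top_of_set ({0..zeta} \<times> {0..zeta})" euclidean_metric g
        "mdist (Csq zeta) f g"] assms
    by (cases z) (simp add: Csq_def dist_real_def)
qed

lemma Csq_dist_le_bound:
  assumes "0 \<le> B" "\<And>z. z \<in> {0..zeta} \<times> {0..zeta} \<Longrightarrow> \<bar>f z - g z\<bar> \<le> B"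
  shows "mdist (Csq zeta) f g \<le> B"
  unfolding Csq_def by (rule mdist_cfunspace_le) (use assms in \<open>auto simp: dist_real_def\<close>)

lemma continuous_map_Csq_eval:
  assumes "z \<in> {0..zeta} \<times> {0..zeta}"
  shows "continuous_map (mtopology_of (Csq zeta)) euclideanreal (\<lambda>a. a z)"
proof -
  have "Lipschitz_continuous_map (Csq zeta) euclidean_metric (\<lambda>a. a z)"
    unfolding Lipschitz_continuous_map_def
    using Csq_dist_le[OF _ _ assms] by (auto simp: dist_real_def intro!: exI[of _ 1])
  then show ?thesis
    using Lipschitz_continuous_imp_continuous_map by fastforce
qed

text \<open>Restricted to the square, these polynomials with rational coefficients form a countable
  dense subset of C([0,zeta]^2).\<close>

datatype ratpoly = Const rat | Fst | Snd | Add ratpoly ratpoly | Mult ratpoly ratpoly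

instance ratpoly :: countable
  by countable_datatype

primrec ratpoly_eval :: "ratpoly \<Rightarrow> real \<times> real \<Rightarrow> real" where
  "ratpoly_eval (Const q) z = of_rat q"
| "ratpoly_eval Fst z = fst z"
| "ratpoly_eval Snd z = snd z"
| "ratpoly_eval (Add p p') z = ratpoly_eval p z + ratpoly_eval p' z"
| "ratpoly_eval (Mult p p') z = ratpoly_eval p z * ratpoly_eval p' z"

lemma continuous_on_ratpoly_eval: "continuous_on S (ratpoly_eval p)"
  by (induction p) (auto intro!: continuous_intros)

definition ratpoly_approx :: "(real \<times> real) set \<Rightarrow> (real \<times> real \<Rightarrow> real) \<Rightarrow> bool" where
  "ratpoly_approx K f \<longleftrightarrow> (\<exists>ps. uniform_limit K (\<lambda>n. ratpoly_eval (ps n)) f sequentially)"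

lemma ratpoly_approx_const: "ratpoly_approx K (\<lambda>z. c)"
proof -
  have "c \<in> closure \<rat>"
    by (simp add: Rats_closure_real)
  then obtain x where x: "\<And>n. x n \<in> \<rat>" "x \<longlonglongrightarrow> c"
    unfolding closure_sequential by blast
  have "\<forall>n. \<exists>q. x n = of_rat q"
    using x(1) by (auto simp: Rats_def)
  then obtain q where "\<And>n. x n = of_rat (q n)"
    by metis
  then have "uniform_limit K (\<lambda>n. ratpoly_eval (Const (q n))) (\<lambda>z. c) sequentially"
    using x(2) by (auto simp: uniform_limit_iff dest: tendstoD)
  then show ?thesis
    unfolding ratpoly_approx_def by (rule exI[of _ "\<lambda>n. Const (q n)"])
qed

lemma ratpoly_approx_add:
  assumes "ratpoly_approx K f" "ratpoly_approx K g"
  shows "ratpoly_approx K (\<lambda>z. f z + g z)"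
proof -
  obtain ps ps' where "uniform_limit K (\<lambda>n. ratpoly_eval (ps n)) f sequentially"
    "uniform_limit K (\<lambda>n. ratpoly_eval (ps' n)) g sequentially"
    using assms unfolding ratpoly_approx_def by blast
  from uniform_limit_add[OF this]
  have "uniform_limit K (\<lambda>n z. ratpoly_eval (Add (ps n) (ps' n)) z) (\<lambda>z. f z + g z) sequentially"
    by simp
  then show ?thesis
    unfolding ratpoly_approx_def by (rule exI[of _ "\<lambda>n. Add (ps n) (ps' n)"])
qed

lemma ratpoly_approx_mult:
  assumes "ratpoly_approx K f" "ratpoly_approx K g" "compact K"
    and "continuous_on K f" "continuous_on K g"
  shows "ratpoly_approx K (\<lambda>z. f z * g z)"
proof -
  obtain ps ps' where lim: "uniform_limit K (\<lambda>n. ratpoly_eval (ps n)) f sequentially"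
    "uniform_limit K (\<lambda>n. ratpoly_eval (ps' n)) g sequentially"
    using assms(1,2) unfolding ratpoly_approx_def by blast
  have "bounded (f ` K)" "bounded (g ` K)"
    using assms(3-5) by (simp_all add: compact_continuous_image compact_imp_bounded)
  from uniform_lim_mult[OF lim this]
  have "uniform_limit K (\<lambda>n z. ratpoly_eval (Mult (ps n) (ps' n)) z) (\<lambda>z. f z * g z) sequentially"
    by simp
  then show ?thesis
    unfolding ratpoly_approx_def by (rule exI[of _ "\<lambda>n. Mult (ps n) (ps' n)"])
qed

lemma ratpoly_approx_real_polynomial_function:
  assumes "real_polynomial_function f" "compact K"
  shows "ratpoly_approx K f"
  using assms(1)
proof induction
  case (linear f)
  have eval: "ratpoly_approx K (ratpoly_eval p)" for p
    unfolding ratpoly_approx_def by (rule exI[of _ "\<lambda>n. p"]) (rule uniform_limit_const)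
  have "ratpoly_eval Fst = fst" "ratpoly_eval Snd = snd"
    by (simp_all add: fun_eq_iff)
  then have proj: "ratpoly_approx K fst" "ratpoly_approx K snd"
    using eval[of Fst] eval[of Snd] by simp_all
  have "linear f"
    using linear.hyps bounded_linear.linear by blast
  have f_eq: "f = (\<lambda>z. fst z * f (1, 0) + snd z * f (0, 1))"
  proof
    fix z :: "real \<times> real"
    have "f z = f (fst z *\<^sub>R (1, 0) + snd z *\<^sub>R (0, 1))"
      by (cases z) simp
    also have "\<dots> = fst z * f (1, 0) + snd z * f (0, 1)"
      unfolding linear_add[OF \<open>linear f\<close>] linear_scale[OF \<open>linear f\<close>] by simp
    finally show "f z = fst z * f (1, 0) + snd z * f (0, 1)" .
  qed
  show ?case
    using proj assms(2)
    by (subst f_eq) (intro ratpoly_approx_add ratpoly_approx_mult ratpoly_approx_const continuous_intros)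
next
  case (mult f g)
  then show ?case
    using assms(2) continuous_on_polymonial_function real_polynomial_function_eq
    by (blast intro: ratpoly_approx_mult)
qed (simp_all add: ratpoly_approx_const ratpoly_approx_add)

lemma Csq_separable: "separable_space (mtopology_of (Csq zeta))"
proof -
  let ?K = "{0..zeta} \<times> {0..zeta}"
  define D where "D = range (\<lambda>p. restrict (ratpoly_eval p) ?K)"
  have "D \<subseteq> mspace (Csq zeta)"
    using continuous_on_ratpoly_eval by (auto simp: D_def Csq_mem cong: continuous_on_cong)
  moreover have "\<exists>a\<in>D. mdist (Csq zeta) f a < e" if f: "f \<in> mspace (Csq zeta)" and "0 < e" for f e
  proof -
    have "compact ?K"
      by (simp add: compact_Times)
    moreover have "continuous_on ?K f"
      using f by (simp add: Csq_mem)
    ultimately obtain g where g: "real_polynomial_function g" "\<And>z. z \<in> ?K \<Longrightarrow> \<bar>f z - g z\<bar> < e/4"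
      using Stone_Weierstrass_real_polynomial_function \<open>0 < e\<close> by (metis zero_less_divide_iff zero_less_numeral)
    obtain ps where "uniform_limit ?K (\<lambda>n. ratpoly_eval (ps n)) g sequentially"
      using ratpoly_approx_real_polynomial_function[OF g(1) \<open>compact ?K\<close>] ratpoly_approx_def by blast
    from uniform_limitD[OF this, of "e/4"] \<open>0 < e\<close>
    have "\<exists>n. \<forall>z\<in>?K. dist (ratpoly_eval (ps n) z) (g z) < e/4"
      by (simp add: eventually_happens'[OF trivial_limit_sequentially])
    then obtain n where n: "\<forall>z\<in>?K. dist (ratpoly_eval (ps n) z) (g z) < e/4" ..
    have "mdist (Csq zeta) f (restrict (ratpoly_eval (ps n)) ?K) \<le> e/2"
    proof (rule Csq_dist_le_bound)
      fix z assume "z \<in> ?K"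
      have "\<bar>ratpoly_eval (ps n) z - g z\<bar> < e/4"
        using bspec[OF n \<open>z \<in> ?K\<close>] by (simp add: dist_real_def)
      then show "\<bar>f z - restrict (ratpoly_eval (ps n)) ?K z\<bar> \<le> e/2"
        using g(2)[OF \<open>z \<in> ?K\<close>] restrict_apply'[OF \<open>z \<in> ?K\<close>, of "ratpoly_eval (ps n)"] by linarith
    qed (use \<open>0 < e\<close> in simp)
    then show ?thesis
      using \<open>0 < e\<close> by (intro bexI[of _ "restrict (ratpoly_eval (ps n)) ?K"]) (auto simp: D_def)
  qed
  ultimately show ?thesis
    unfolding separable_space_mtopology_of_iff by (metis D_def countable_image countableI_type)
qed

section \<open>Bump functions and a Slutsky-type lemma\<close>

text \<open>Inserting r keeps the infimum meaningful for T = {} and caps the distance at r.\<close>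

definition bump :: "'a metric \<Rightarrow> 'a set \<Rightarrow> real \<Rightarrow> 'a \<Rightarrow> real" where
  "bump m T r y = 1 - Inf (insert r ((\<lambda>t. mdist m y t) ` T)) / r"

lemma bdd_below_insert_mdist: "bdd_below (insert r ((\<lambda>t. mdist m y t) ` T))"
  by (rule bdd_belowI[of _ "min r 0"]) (auto intro: min.coboundedI2)

lemma Inf_insert_mdist_bounds:
  assumes "0 < r"
  shows "0 \<le> Inf (insert r ((\<lambda>t. mdist m y t) ` T))" "Inf (insert r ((\<lambda>t. mdist m y t) ` T)) \<le> r"
  using assms by (auto intro: cInf_greatest cInf_lower[OF insertI1 bdd_below_insert_mdist])

lemma bump_bounds:
  assumes "0 < r"
  shows "0 \<le> bump m T r y" "bump m T r y \<le> 1"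
  using Inf_insert_mdist_bounds[OF assms, of m y T] assms by (simp_all add: bump_def)

lemma bump_eq_1:
  assumes "0 < r" "y \<in> T" "T \<subseteq> mspace m"
  shows "bump m T r y = 1"
proof -
  have "Inf (insert r ((\<lambda>t. mdist m y t) ` T)) \<le> mdist m y y"
    using assms(2) by (intro cInf_lower[OF _ bdd_below_insert_mdist]) auto
  moreover have "mdist m y y = 0"
    using assms(2,3) by auto
  ultimately have "Inf (insert r ((\<lambda>t. mdist m y t) ` T)) = 0"
    using Inf_insert_mdist_bounds(1)[OF assms(1), of m y T] by linarith
  then show ?thesis
    by (simp add: bump_def)
qed

lemma bump_eq_0:
  assumes "0 < r" "\<And>t. t \<in> T \<Longrightarrow> r \<le> mdist m y t"
  shows "bump m T r y = 0"
proof -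
  have "r \<le> Inf (insert r ((\<lambda>t. mdist m y t) ` T))"
    using assms by (intro cInf_greatest) auto
  then show ?thesis
    using Inf_insert_mdist_bounds(2)[OF assms(1), of m y T] assms(1) by (simp add: bump_def)
qed

lemma Inf_insert_mdist_le:
  assumes "x \<in> mspace m" "y \<in> mspace m" "T \<subseteq> mspace m"
  shows "Inf (insert r ((\<lambda>t. mdist m x t) ` T)) \<le> mdist m x y + Inf (insert r ((\<lambda>t. mdist m y t) ` T))"
proof -
  let ?D = "\<lambda>y. Inf (insert r ((\<lambda>t. mdist m y t) ` T))"
  have "?D x - mdist m x y \<le> u" if u: "u \<in> insert r ((\<lambda>t. mdist m y t) ` T)" for u
  proof -
    consider "u = r" | t where "t \<in> T" "u = mdist m y t"
      using u by blast
    then show ?thesis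
    proof cases
      case 1
      then show ?thesis
        using cInf_lower[OF insertI1 bdd_below_insert_mdist, of r m x T] mdist_nonneg[of m x y]
        by linarith
    next
      case 2
      then have "?D x \<le> mdist m x t"
        by (intro cInf_lower[OF _ bdd_below_insert_mdist]) auto
      also have "\<dots> \<le> mdist m x y + mdist m y t"
        using assms 2 by (intro mdist_triangle) auto
      finally show ?thesis
        using 2 by simp
    qed
  qed
  then have "?D x - mdist m x y \<le> ?D y"
    by (intro cInf_greatest) auto
  then show ?thesis
    by simp
qed

lemma continuous_map_bump:
  assumes "0 < r" "T \<subseteq> mspace m"
  shows "continuous_map (mtopology_of m) euclideanreal (bump m T r)"
proof -
  let ?D = "\<lambda>y. Inf (insert r ((\<lambda>t. mdist m y t) ` T))"
  have "Lipschitz_continuous_map m euclidean_metric (bump m T r)"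
    unfolding Lipschitz_continuous_map_def
  proof (intro conjI exI ballI)
    fix x y assume xy: "x \<in> mspace m" "y \<in> mspace m"
    then have "\<bar>?D y - ?D x\<bar> \<le> mdist m x y"
      using Inf_insert_mdist_le[OF xy assms(2), of r] Inf_insert_mdist_le[OF xy(2,1) assms(2), of r]
        mdist_commute[of m x y] by linarith
    have "bump m T r x - bump m T r y = (?D y - ?D x) / r"
      unfolding bump_def by (simp add: diff_divide_distrib)
    then have "\<bar>bump m T r x - bump m T r y\<bar> = \<bar>?D y - ?D x\<bar> / r"
      by (simp only: abs_div_pos[OF assms(1)])
    also have "\<dots> \<le> mdist m x y / r"
      using \<open>\<bar>?D y - ?D x\<bar> \<le> mdist m x y\<close> by (rule divide_right_mono) (use assms(1) in simp)
    finally show "mdist euclidean_metric (bump m T r x) (bump m T r y) \<le> 1 / r * mdist m x y"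
      by (simp add: dist_real_def)
  qed simp
  then show ?thesis
    using Lipschitz_continuous_imp_continuous_map by fastforce
qed

lemma weak_conv_bump_eventually_small:
  assumes "prob_space N" "Y \<in> measurable N (borel_of_metric m)"
    and conv: "weak_conv_metric m M X N Y"
    and r: "\<And>k. 0 < r k" and T: "\<And>k. T k \<subseteq> mspace m"
    and far: "\<And>y. y \<in> mspace m \<Longrightarrow> \<forall>\<^sub>F k in sequentially. \<forall>t\<in>T k. r k \<le> mdist m y t"
    and "0 < e"
  obtains k g where "continuous_map (mtopology_of m) euclideanreal g"
    "\<And>y. 0 \<le> g y" "\<And>y. g y \<le> 1" "\<And>y. y \<in> T k \<Longrightarrow> g y = 1"
    "\<forall>\<^sub>F n in sequentially. (\<integral>\<omega>. g (X n \<omega>) \<partial>M n) < e"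
proof -
  interpret N: prob_space N
    by fact
  have cont: "continuous_map (mtopology_of m) euclideanreal (bump m (T k) (r k))" for k
    using continuous_map_bump[OF r T] .
  have bump_abs: "\<bar>bump m (T k) (r k) y\<bar> \<le> 1" for k y
    using bump_bounds[OF r[of k], of m "T k" y] by linarith
  have "(\<lambda>k. \<integral>\<omega>. bump m (T k) (r k) (Y \<omega>) \<partial>N) \<longlonglongrightarrow> (\<integral>\<omega>. 0 \<partial>N)"
  proof (rule integral_dominated_convergence[where w = "\<lambda>_. 1"])
    show "AE \<omega> in N. (\<lambda>k. bump m (T k) (r k) (Y \<omega>)) \<longlonglongrightarrow> 0"
    proof (rule AE_I2)
      fix \<omega> assume "\<omega> \<in> space N"
      then have "\<forall>\<^sub>F k in sequentially. \<forall>t\<in>T k. r k \<le> mdist m (Y \<omega>) t"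
        using far measurable_space[OF assms(2)] by simp
      then show "(\<lambda>k. bump m (T k) (r k) (Y \<omega>)) \<longlonglongrightarrow> 0"
        by (rule tendsto_eventually[OF eventually_mono]) (simp add: bump_eq_0 r)
    qed
    show "AE \<omega> in N. norm (bump m (T k) (r k) (Y \<omega>)) \<le> 1" for k
      using bump_abs by (intro AE_I2) simp
  qed (use borel_measurable_continuous_map_comp[OF assms(2) cont] in simp_all)
  then have "(\<lambda>k. \<integral>\<omega>. bump m (T k) (r k) (Y \<omega>) \<partial>N) \<longlonglongrightarrow> 0"
    by simp
  from order_tendstoD(2)[OF this \<open>0 < e\<close>]
  obtain k where k: "(\<integral>\<omega>. bump m (T k) (r k) (Y \<omega>) \<partial>N) < e"
    using eventually_happens'[OF trivial_limit_sequentially] by blast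
  have "bounded (bump m (T k) (r k) ` mspace m)"
    using bump_abs by (intro boundedI[of _ 1]) auto
  then have "(\<lambda>n. \<integral>\<omega>. bump m (T k) (r k) (X n \<omega>) \<partial>M n) \<longlonglongrightarrow> (\<integral>\<omega>. bump m (T k) (r k) (Y \<omega>) \<partial>N)"
    using conv cont unfolding weak_conv_metric_def by blast
  from order_tendstoD(2)[OF this k] show ?thesis
    using that[OF cont] bump_bounds[OF r[of k], of m "T k"] bump_eq_1[OF r[of k] _ T[of k]] by blast
qed

lemma integral_diff_le_bump:
  fixes u v g :: "'w \<Rightarrow> real"
  assumes "prob_space P" "integrable P u" "integrable P v"
    and "g \<in> borel_measurable P" "\<And>\<omega>. 0 \<le> g \<omega>" "\<And>\<omega>. g \<omega> \<le> 1"
    and "A \<in> sets P" "0 \<le> \<epsilon>"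
    and bound: "\<And>\<omega>. \<omega> \<in> space P \<Longrightarrow> \<bar>u \<omega> - v \<omega>\<bar> \<le> C"
    and small: "\<And>\<omega>. \<omega> \<in> space P \<Longrightarrow> \<omega> \<notin> A \<Longrightarrow> g \<omega> < 1 \<Longrightarrow> \<bar>u \<omega> - v \<omega>\<bar> \<le> \<epsilon>"
  shows "\<bar>(\<integral>\<omega>. u \<omega> \<partial>P) - (\<integral>\<omega>. v \<omega> \<partial>P)\<bar> \<le> \<epsilon> + C * (\<integral>\<omega>. g \<omega> \<partial>P) + C * measure P A"
proof -
  interpret prob_space P
    by fact
  have int_g: "integrable P g"
    using assms(4-6) by (intro integrable_const_bound[where B = 1] AE_I2) auto
  have int_A: "integrable P (indicator A :: 'w \<Rightarrow> real)"
    using assms(7) by (intro integrable_real_indicator) (simp_all add: less_top[symmetric])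
  have pointwise: "\<bar>u \<omega> - v \<omega>\<bar> \<le> \<epsilon> + C * g \<omega> + C * indicator A \<omega>" if "\<omega> \<in> space P" for \<omega>
  proof -
    have "0 \<le> C"
      using bound[OF that] by linarith
    then have "0 \<le> C * g \<omega>"
      using assms(5) by simp
    moreover have "C * g \<omega> = C" if "\<not> g \<omega> < 1"
      using that assms(6)[of \<omega>] by simp
    ultimately show ?thesis
      using \<open>0 \<le> \<epsilon>\<close> \<open>0 \<le> C\<close> bound[OF that] small[OF that]
      by (cases "\<omega> \<in> A"; cases "g \<omega> < 1") auto
  qed
  have "\<bar>(\<integral>\<omega>. u \<omega> \<partial>P) - (\<integral>\<omega>. v \<omega> \<partial>P)\<bar> \<le> (\<integral>\<omega>. \<bar>u \<omega> - v \<omega>\<bar> \<partial>P)"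
    using assms(2,3) integral_abs_bound[of P "\<lambda>\<omega>. u \<omega> - v \<omega>"] by simp
  also have "\<dots> \<le> (\<integral>\<omega>. \<epsilon> + C * g \<omega> + C * indicator A \<omega> \<partial>P)"
    using assms(2,3) int_g int_A pointwise by (intro integral_mono) auto
  also have "\<dots> = \<epsilon> + C * (\<integral>\<omega>. g \<omega> \<partial>P) + C * measure P A"
    using int_g int_A assms(7) by (simp add: prob_space)
  finally show ?thesis .
qed

lemma diagonal_jumps_eventually_far:
  assumes f: "continuous_map (mtopology_of (prod_metric m m)) euclideanreal f"
    and "0 < \<epsilon>" "y \<in> mspace m" "(r \<longlongrightarrow> 0) F"
  shows "\<forall>\<^sub>F k in F. \<forall>t\<in>mspace m. (\<exists>x\<in>mspace m. mdist m x t < r k \<and> \<epsilon> < \<bar>f (x, t) - f (t, t)\<bar>)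
           \<longrightarrow> r k \<le> mdist m y t"
proof -
  interpret Metric_space12 "mspace m" "mdist m" "mspace m" "mdist m"
    by (rule Metric_space12_mspace_mdist)
  obtain \<rho> where "0 < \<rho>" and \<rho>: "\<And>z. z \<in> mspace m \<times> mspace m \<Longrightarrow>
      prod_dist (mdist m) (mdist m) (y, y) z < \<rho> \<Longrightarrow> \<bar>f z - f (y, y)\<bar> < \<epsilon>/2"
    using continuous_map_mtopology_of_realD[OF f, of "(y, y)" "\<epsilon>/2"] assms(2,3) by auto
  have "\<forall>\<^sub>F k in F. 3 * r k < \<rho>"
    using order_tendstoD(2)[OF tendsto_mult_right_zero[OF assms(4), of 3] \<open>0 < \<rho>\<close>] by simp
  then show ?thesis
  proof eventually_elim
    case (elim k)
    show ?case
    proof (intro ballI impI)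
      fix t assume t: "t \<in> mspace m"
        and "\<exists>x\<in>mspace m. mdist m x t < r k \<and> \<epsilon> < \<bar>f (x, t) - f (t, t)\<bar>"
      then obtain x where x: "x \<in> mspace m" "mdist m x t < r k" "\<epsilon> < \<bar>f (x, t) - f (t, t)\<bar>"
        by blast
      show "r k \<le> mdist m y t"
      proof (rule ccontr)
        assume "\<not> r k \<le> mdist m y t"
        moreover have "prod_dist (mdist m) (mdist m) (y, y) (x, t) \<le> mdist m y x + mdist m y t"
          "prod_dist (mdist m) (mdist m) (y, y) (t, t) \<le> mdist m y t + mdist m y t"
          using prod_metric_le_components[of y x y t] prod_metric_le_components[of y t y t] x(1) t assms(3)
          by simp_all
        moreover have "mdist m y x \<le> mdist m y t + mdist m x t"
          using M1.triangle[of y t x] M1.commute[of t x] x(1) t assms(3) by simp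
        ultimately have "prod_dist (mdist m) (mdist m) (y, y) (x, t) < \<rho>"
          "prod_dist (mdist m) (mdist m) (y, y) (t, t) < \<rho>"
          using x(2) elim mdist_nonneg[of m x t] by linarith+
        then have "\<bar>f (x, t) - f (y, y)\<bar> < \<epsilon>/2" "\<bar>f (t, t) - f (y, y)\<bar> < \<epsilon>/2"
          using \<rho> x t by auto
        then show False
          using x(3) by linarith
      qed
    qed
  qed
qed

definition mdist_tendsto_zero_in_prob ::
  "'a metric \<Rightarrow> (nat \<Rightarrow> 'w measure) \<Rightarrow> (nat \<Rightarrow> 'w \<Rightarrow> 'a) \<Rightarrow> (nat \<Rightarrow> 'w \<Rightarrow> 'a) \<Rightarrow> bool" where
  "mdist_tendsto_zero_in_prob m M X Y \<longleftrightarrow>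
     (\<forall>\<delta>>0. (\<lambda>n. measure (M n) {\<omega> \<in> space (M n). \<delta> \<le> mdist m (X n \<omega>) (Y n \<omega>)}) \<longlonglongrightarrow> 0)"

lemma integral_diff_diagonal_le:
  assumes "prob_space P" "separable_space (mtopology_of m)"
    and X: "X \<in> measurable P (borel_of_metric m)" and Y: "Y \<in> measurable P (borel_of_metric m)"
    and f: "continuous_map (mtopology_of (prod_metric m m)) euclideanreal f"
    and B: "\<And>z. z \<in> mspace m \<times> mspace m \<Longrightarrow> \<bar>f z\<bar> \<le> B"
    and g: "continuous_map (mtopology_of m) euclideanreal g" "\<And>y. 0 \<le> g y" "\<And>y. g y \<le> 1"
    and g_eq_1: "\<And>t x. t \<in> mspace m \<Longrightarrow> x \<in> mspace m \<Longrightarrow> mdist m x t < r \<Longrightarrow>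
        \<epsilon> < \<bar>f (x, t) - f (t, t)\<bar> \<Longrightarrow> g t = 1"
    and "0 \<le> \<epsilon>"
  shows "\<bar>(\<integral>\<omega>. f (X \<omega>, Y \<omega>) \<partial>P) - (\<integral>\<omega>. f (Y \<omega>, Y \<omega>) \<partial>P)\<bar>
    \<le> \<epsilon> + 2 * B * (\<integral>\<omega>. g (Y \<omega>) \<partial>P) + 2 * B * measure P {\<omega> \<in> space P. r \<le> mdist m (X \<omega>) (Y \<omega>)}"
proof (rule integral_diff_le_bump[OF assms(1)])
  have "bounded (f ` (mspace m \<times> mspace m))"
    using B by (intro boundedI[of _ B]) auto
  then show "integrable P (\<lambda>\<omega>. f (X \<omega>, Y \<omega>))" "integrable P (\<lambda>\<omega>. f (Y \<omega>, Y \<omega>))"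
    using integrable_continuous_pair[OF assms(1,2) _ _ f] X Y by auto
  have "(\<lambda>\<omega>. mdist m (X \<omega>) (Y \<omega>)) \<in> borel_measurable P"
    using borel_measurable_continuous_pair[OF assms(2) X Y, of "\<lambda>(x, y). mdist m x y"]
      continuous_map_metric[of m] by simp
  then show "{\<omega> \<in> space P. r \<le> mdist m (X \<omega>) (Y \<omega>)} \<in> sets P"
    by measurable
  show "\<bar>f (X \<omega>, Y \<omega>) - f (Y \<omega>, Y \<omega>)\<bar> \<le> 2 * B" if "\<omega> \<in> space P" for \<omega>
    using B[of "(X \<omega>, Y \<omega>)"] B[of "(Y \<omega>, Y \<omega>)"]
      measurable_space[OF X that] measurable_space[OF Y that] by simp
  show "\<bar>f (X \<omega>, Y \<omega>) - f (Y \<omega>, Y \<omega>)\<bar> \<le> \<epsilon>"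
    if "\<omega> \<in> space P" "\<omega> \<notin> {\<omega> \<in> space P. r \<le> mdist m (X \<omega>) (Y \<omega>)}" "g (Y \<omega>) < 1" for \<omega>
    using that g_eq_1[of "Y \<omega>" "X \<omega>"] measurable_space[OF X that(1)] measurable_space[OF Y that(1)]
    by (force simp: not_le)
qed (use g borel_measurable_continuous_map_comp[OF Y g(1)] \<open>0 \<le> \<epsilon>\<close> in auto)

lemma integral_diff_diagonal_tendsto_zero:
  assumes probM: "\<And>n. prob_space (M n)" and probN: "prob_space N"
    and sep: "separable_space (mtopology_of m)"
    and X: "\<And>n. X n \<in> measurable (M n) (borel_of_metric m)"
    and Y: "\<And>n. Y n \<in> measurable (M n) (borel_of_metric m)"
    and Yl: "Yl \<in> measurable N (borel_of_metric m)"
    and conv: "weak_conv_metric m M Y N Yl"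
    and in_prob: "mdist_tendsto_zero_in_prob m M X Y"
    and f: "continuous_map (mtopology_of (prod_metric m m)) euclideanreal f"
    and f_bounded: "bounded (f ` (mspace m \<times> mspace m))"
  shows "(\<lambda>n. (\<integral>\<omega>. f (X n \<omega>, Y n \<omega>) \<partial>M n) - (\<integral>\<omega>. f (Y n \<omega>, Y n \<omega>) \<partial>M n)) \<longlonglongrightarrow> 0"
proof (rule tendstoI)
  fix r :: real assume "0 < r"
  obtain B where "0 < B" and B: "\<And>z. z \<in> mspace m \<times> mspace m \<Longrightarrow> \<bar>f z\<bar> \<le> B"
    using f_bounded unfolding bounded_pos by auto
  define \<epsilon> where "\<epsilon> = r / (2 + 8 * B)"
  have "0 < \<epsilon>"
    using \<open>0 < r\<close> \<open>0 < B\<close> by (simp add: \<epsilon>_def)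
  have "\<epsilon> * (2 + 8 * B) = r"
    using \<open>0 < B\<close> by (simp add: \<epsilon>_def)
  then have "\<epsilon> + 2 * B * \<epsilon> + 2 * B * \<epsilon> < r"
    using \<open>0 < r\<close> by (simp add: algebra_simps)
  \<comment> \<open>f(X_n,Y_n) and f(Y_n,Y_n) differ by more than \<open>\<epsilon>\<close> only if X_n and Y_n are far apart
      or Y_n lies in T k, where the bump g equals 1.\<close>
  define T where "T k = {t \<in> mspace m. \<exists>x\<in>mspace m.
      mdist m x t < 1 / real (Suc k) \<and> \<epsilon> < \<bar>f (x, t) - f (t, t)\<bar>}" for k
  have far: "\<forall>\<^sub>F k in sequentially. \<forall>t\<in>T k. 1 / real (Suc k) \<le> mdist m y t"
    if "y \<in> mspace m" for y
    using diagonal_jumps_eventually_far[OF f \<open>0 < \<epsilon>\<close> that LIMSEQ_Suc[OF lim_inverse_n']]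
    by eventually_elim (auto simp: T_def)
  have "\<And>k. 0 < 1 / real (Suc k)" "\<And>k. T k \<subseteq> mspace m"
    by (auto simp: T_def)
  then obtain k g where g: "continuous_map (mtopology_of m) euclideanreal g"
      "\<And>y. 0 \<le> g y" "\<And>y. g y \<le> 1" "\<And>y. y \<in> T k \<Longrightarrow> g y = 1"
    and small_g: "\<forall>\<^sub>F n in sequentially. (\<integral>\<omega>. g (Y n \<omega>) \<partial>M n) < \<epsilon>"
    by (rule weak_conv_bump_eventually_small[OF probN Yl conv _ _ far \<open>0 < \<epsilon>\<close>]) blast+
  have small_far: "\<forall>\<^sub>F n in sequentially.
      measure (M n) {\<omega> \<in> space (M n). 1 / real (Suc k) \<le> mdist m (X n \<omega>) (Y n \<omega>)} < \<epsilon>"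
    using order_tendstoD(2)[OF in_prob[unfolded mdist_tendsto_zero_in_prob_def, rule_format] \<open>0 < \<epsilon>\<close>]
    by simp
  from small_g small_far show "\<forall>\<^sub>F n in sequentially.
      dist ((\<integral>\<omega>. f (X n \<omega>, Y n \<omega>) \<partial>M n) - (\<integral>\<omega>. f (Y n \<omega>, Y n \<omega>) \<partial>M n)) 0 < r"
  proof eventually_elim
    case (elim n)
    have "\<bar>(\<integral>\<omega>. f (X n \<omega>, Y n \<omega>) \<partial>M n) - (\<integral>\<omega>. f (Y n \<omega>, Y n \<omega>) \<partial>M n)\<bar>
        \<le> \<epsilon> + 2 * B * (\<integral>\<omega>. g (Y n \<omega>) \<partial>M n)
          + 2 * B * measure (M n) {\<omega> \<in> space (M n). 1 / real (Suc k) \<le> mdist m (X n \<omega>) (Y n \<omega>)}"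
      using \<open>0 < \<epsilon>\<close> by (intro integral_diff_diagonal_le[OF probM sep X Y f B g(1-3)] g(4)) (auto simp: T_def)
    also have "\<dots> < \<epsilon> + 2 * B * \<epsilon> + 2 * B * \<epsilon>"
      using elim \<open>0 < B\<close> by (intro add_strict_mono add_strict_left_mono) auto
    finally show ?case
      using \<open>\<epsilon> + 2 * B * \<epsilon> + 2 * B * \<epsilon> < r\<close> by (simp add: dist_real_def)
  qed
qed

lemma weak_conv_pair_if_mdist_tendsto_zero_in_prob:
  assumes probM: "\<And>n. prob_space (M n)" and probN: "prob_space N"
    and sep: "separable_space (mtopology_of m)"
    and X: "\<And>n. X n \<in> measurable (M n) (borel_of_metric m)"
    and Y: "\<And>n. Y n \<in> measurable (M n) (borel_of_metric m)"
    and Yl: "Yl \<in> measurable N (borel_of_metric m)"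
    and conv: "weak_conv_metric m M Y N Yl"
    and in_prob: "mdist_tendsto_zero_in_prob m M X Y"
  shows "weak_conv_metric (prod_metric m m) M (\<lambda>n \<omega>. (X n \<omega>, Y n \<omega>)) N (\<lambda>\<omega>. (Yl \<omega>, Yl \<omega>))"
  unfolding weak_conv_metric_def
proof (intro allI impI)
  fix f
  assume "continuous_map (mtopology_of (prod_metric m m)) euclideanreal f \<and>
    bounded (f ` mspace (prod_metric m m))"
  then have f: "continuous_map (mtopology_of (prod_metric m m)) euclideanreal f"
    and f_bounded: "bounded (f ` (mspace m \<times> mspace m))"
    by simp_all
  have "continuous_map (mtopology_of m) (mtopology_of (prod_metric m m)) (\<lambda>y. (y, y))"
    by (simp add: continuous_map_paired)
  from continuous_map_compose[OF this f]
  have "continuous_map (mtopology_of m) euclideanreal (\<lambda>y. f (y, y))"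
    by (simp add: o_def)
  moreover have "bounded ((\<lambda>y. f (y, y)) ` mspace m)"
    by (rule bounded_subset[OF f_bounded]) auto
  ultimately have "(\<lambda>n. \<integral>\<omega>. f (Y n \<omega>, Y n \<omega>) \<partial>M n) \<longlonglongrightarrow> (\<integral>\<omega>. f (Yl \<omega>, Yl \<omega>) \<partial>N)"
    using conv unfolding weak_conv_metric_def by blast
  from tendsto_add[OF integral_diff_diagonal_tendsto_zero[OF assms f f_bounded] this]
  show "(\<lambda>n. \<integral>\<omega>. f (X n \<omega>, Y n \<omega>) \<partial>M n) \<longlonglongrightarrow> (\<integral>\<omega>. f (Yl \<omega>, Yl \<omega>) \<partial>N)"
    by simp
qed

section \<open>Uniform closeness of the two pseudo-metrics\<close>

lemma Csq_le_if_le_on_rationals: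
  assumes "0 < zeta" "a \<in> mspace (Csq zeta)" "b \<in> mspace (Csq zeta)"
    and le: "\<And>p. p \<in> (\<rat> \<inter> {0..zeta}) \<times> (\<rat> \<inter> {0..zeta}) \<Longrightarrow> b p \<le> a p"
    and "z \<in> {0..zeta} \<times> {0..zeta}"
  shows "b z \<le> a z"
proof -
  have "closure ({0..zeta} \<inter> \<rat>) = {0..zeta}"
    using closure_convex_Int_superset[of "{0..zeta}" \<rat>] assms(1) by (simp add: Rats_closure_real)
  then have closure: "closure ((\<rat> \<inter> {0..zeta}) \<times> (\<rat> \<inter> {0..zeta})) = {0..zeta} \<times> {0..zeta}"
    by (simp add: closure_Times Int_commute)
  have "continuous_on (closure ((\<rat> \<inter> {0..zeta}) \<times> (\<rat> \<inter> {0..zeta}))) (\<lambda>z. a z - b z)"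
    unfolding closure using assms(2,3) by (intro continuous_intros) (simp_all add: Csq_mem)
  from continuous_ge_on_closure[OF this, of z 0] show ?thesis
    using le assms(5) unfolding closure by simp
qed

lemma AE_Csq_le_if_AE_le:
  assumes "0 < zeta"
    and "\<And>\<omega>. \<omega> \<in> space P \<Longrightarrow> a \<omega> \<in> mspace (Csq zeta)" "\<And>\<omega>. \<omega> \<in> space P \<Longrightarrow> b \<omega> \<in> mspace (Csq zeta)"
    and le: "\<And>s t. s \<in> {0..zeta} \<Longrightarrow> t \<in> {0..zeta} \<Longrightarrow> AE \<omega> in P. b \<omega> (s, t) \<le> a \<omega> (s, t)"
  shows "AE \<omega> in P. \<forall>z\<in>{0..zeta} \<times> {0..zeta}. b \<omega> z \<le> a \<omega> z"
proof -
  have "countable ((\<rat> \<inter> {0..zeta}) \<times> (\<rat> \<inter> {0..zeta}))"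
    by (blast intro: countable_SIGMA countable_rat countable_Int1)
  then have "AE \<omega> in P. \<forall>p\<in>(\<rat> \<inter> {0..zeta}) \<times> (\<rat> \<inter> {0..zeta}). b \<omega> p \<le> a \<omega> p"
    using le by (subst AE_ball_countable) auto
  then show ?thesis
    by (rule AE_mp[OF _ AE_I2]) (use assms(1-3) Csq_le_if_le_on_rationals in blast)
qed

text \<open>Oscillation is measured against a(s,s) rather than 0 because these sets must stay away
  from the limit dlim, which need not vanish on the diagonal.\<close>

definition Csq_diag_osc :: "real \<Rightarrow> real \<Rightarrow> real \<Rightarrow> (real \<times> real \<Rightarrow> real) set" where
  "Csq_diag_osc zeta h c = {a \<in> mspace (Csq zeta).
     \<exists>s\<in>{0..zeta}. \<exists>t\<in>{0..zeta}. \<bar>s - t\<bar> \<le> h \<and> c \<le> \<bar>a (s, t) - a (s, s)\<bar>}"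

lemma Csq_diag_osc_eventually_far:
  assumes y: "y \<in> mspace (Csq zeta)" and "0 < c" and "(h \<longlongrightarrow> 0) F"
  shows "\<forall>\<^sub>F k in F. \<forall>a\<in>Csq_diag_osc zeta (h k) c. c/4 \<le> mdist (Csq zeta) y a"
proof -
  have "uniformly_continuous_on ({0..zeta} \<times> {0..zeta}) y"
    using y by (intro compact_uniformly_continuous) (simp_all add: Csq_mem compact_Times)
  then obtain \<eta> where "0 < \<eta>" and \<eta>: "\<And>z z'. z \<in> {0..zeta} \<times> {0..zeta} \<Longrightarrow> z' \<in> {0..zeta} \<times> {0..zeta} \<Longrightarrow>
      dist z' z < \<eta> \<Longrightarrow> \<bar>y z' - y z\<bar> < c/2"
    using \<open>0 < c\<close> unfolding uniformly_continuous_on_def dist_real_def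
    by (metis half_gt_zero)
  from order_tendstoD(2)[OF assms(3) \<open>0 < \<eta>\<close>] show ?thesis
  proof eventually_elim
    case (elim k)
    show ?case
    proof
      fix a assume "a \<in> Csq_diag_osc zeta (h k) c"
      then obtain s t where a: "a \<in> mspace (Csq zeta)" and st: "s \<in> {0..zeta}" "t \<in> {0..zeta}"
        "\<bar>s - t\<bar> \<le> h k" "c \<le> \<bar>a (s, t) - a (s, s)\<bar>"
        unfolding Csq_diag_osc_def by blast
      have "dist (s, t) (s, s) < \<eta>"
        using st(3) elim by (simp add: dist_Pair_Pair dist_real_def abs_minus_commute)
      then have "\<bar>y (s, t) - y (s, s)\<bar> < c/2"
        using \<eta> st by simp
      moreover have "\<bar>a z - y z\<bar> \<le> mdist (Csq zeta) y a" if "z \<in> {0..zeta} \<times> {0..zeta}" for z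
        using Csq_dist_le[OF a y that] by (simp add: mdist_commute)
      then have "\<bar>a (s, t) - y (s, t)\<bar> \<le> mdist (Csq zeta) y a" "\<bar>a (s, s) - y (s, s)\<bar> \<le> mdist (Csq zeta) y a"
        using st(1,2) by simp_all
      ultimately show "c/4 \<le> mdist (Csq zeta) y a"
        using st(4) by linarith
    qed
  qed
qed

lemma Mps_lt_if_not_Csq_diag_osc:
  assumes "a \<in> Mps zeta" "a \<notin> Csq_diag_osc zeta h c"
    and "s \<in> {0..zeta}" "t \<in> {0..zeta}" "\<bar>s - t\<bar> \<le> h"
  shows "a (s, t) < c"
proof -
  have "\<not> c \<le> \<bar>a (s, t) - a (s, s)\<bar>"
    using assms unfolding Csq_diag_osc_def Mps_def by blast
  moreover have "a (s, s) = 0" "0 \<le> a (s, t)"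
    using assms(1,3,4) unfolding Mps_def by blast+
  ultimately show ?thesis
    by simp
qed

lemma finite_net_atLeastAtMost:
  fixes a b h :: real
  assumes "0 < h"
  obtains G where "finite G" "G \<subseteq> {a..b}" "\<And>s. s \<in> {a..b} \<Longrightarrow> \<exists>p\<in>G. \<bar>s - p\<bar> \<le> h"
proof -
  obtain G where "G \<subseteq> {a..b}" "finite G" "{a..b} \<subseteq> (\<Union>p\<in>G. ball p h)"
    using compactE_image[of "{a..b}" "{a..b}" "\<lambda>p. ball p h"] assms by force
  then show ?thesis
    using that by (force simp: dist_real_def abs_minus_commute)
qed

text \<open>The chain behind the constant 5: for grid points p, q close to s, t,
  a(s,t) \<le> a(s,p) + a(p,q) + a(q,t) \<le> b(p,q) + 3c \<le> b(p,s) + b(s,t) + b(t,q) + 3c \<le> b(s,t) + 5c.\<close>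
lemma Mps_dist_le_of_net:
  assumes a: "a \<in> Mps zeta" and b: "b \<in> Mps zeta"
    and le: "\<And>z. z \<in> {0..zeta} \<times> {0..zeta} \<Longrightarrow> b z \<le> a z"
    and G: "G \<subseteq> {0..zeta}" "\<And>s. s \<in> {0..zeta} \<Longrightarrow> \<exists>p\<in>G. \<bar>s - p\<bar> \<le> h"
    and near: "\<And>s t. s \<in> {0..zeta} \<Longrightarrow> t \<in> {0..zeta} \<Longrightarrow> \<bar>s - t\<bar> \<le> h \<Longrightarrow> a (s, t) < c"
    and net: "\<And>p q. p \<in> G \<Longrightarrow> q \<in> G \<Longrightarrow> \<bar>b (p, q) - a (p, q)\<bar> \<le> c"
    and "0 \<le> c"
  shows "mdist (Csq zeta) b a \<le> 5 * c"
proof (rule Csq_dist_le_bound)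
  fix z assume "z \<in> {0..zeta} \<times> {0..zeta}"
  then obtain s t where z: "z = (s, t)" and s: "s \<in> {0..zeta}" and t: "t \<in> {0..zeta}"
    by blast
  obtain p q where p: "p \<in> G" "\<bar>s - p\<bar> \<le> h" and q: "q \<in> G" "\<bar>t - q\<bar> \<le> h"
    using G(2) s t by blast
  have pq: "p \<in> {0..zeta}" "q \<in> {0..zeta}"
    using p q G(1) by auto
  have tri_a: "a (x, w) \<le> a (x, y) + a (y, w)" and tri_b: "b (x, w) \<le> b (x, y) + b (y, w)"
    if "x \<in> {0..zeta}" "y \<in> {0..zeta}" "w \<in> {0..zeta}" for x y w
    using a b that unfolding Mps_def by blast+
  have "a (s, t) \<le> a (s, p) + a (p, q) + a (q, t)"
    using tri_a[OF s pq(1) t] tri_a[OF pq t] by simp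
  moreover have "b (p, q) \<le> b (p, s) + b (s, t) + b (t, q)"
    using tri_b[OF pq(1) s pq(2)] tri_b[OF s t pq(2)] by simp
  moreover have "a (s, p) < c" "a (p, s) < c" "a (q, t) < c" "a (t, q) < c"
    using near s t pq p(2) q(2) by (simp_all add: abs_minus_commute)
  moreover have "b (p, s) \<le> a (p, s)" "b (t, q) \<le> a (t, q)" "b (s, t) \<le> a (s, t)"
    using le s t pq by simp_all
  ultimately show "\<bar>b z - a z\<bar> \<le> 5 * c"
    using net[OF p(1) q(1)] z by (simp add: abs_le_iff)
qed (use \<open>0 \<le> c\<close> in simp)

lemma measure_le_integral_add_sum_of_AE_cover:
  assumes "prob_space P" "integrable P g" "\<And>\<omega>. 0 \<le> g \<omega>"
    and "finite I" "\<And>i. i \<in> I \<Longrightarrow> B i \<in> sets P"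
    and cover: "AE \<omega> in P. \<omega> \<in> A \<longrightarrow> 1 \<le> g \<omega> \<or> (\<exists>i\<in>I. \<omega> \<in> B i)"
  shows "measure P A \<le> (\<integral>\<omega>. g \<omega> \<partial>P) + (\<Sum>i\<in>I. measure P (B i))"
proof -
  interpret prob_space P
    by fact
  let ?G = "{\<omega> \<in> space P. 1 \<le> g \<omega>}"
  have G: "?G \<in> sets P"
    using assms(2) by measurable
  have B: "(\<Union>i\<in>I. B i) \<in> sets P"
    using assms(4,5) by blast
  have "measure P A \<le> measure P (?G \<union> (\<Union>i\<in>I. B i))"
    using cover G B by (intro finite_measure_mono_AE) (auto elim: AE_mp intro!: AE_I2)
  also have "\<dots> \<le> measure P ?G + measure P (\<Union>i\<in>I. B i)"
    using G B by (rule measure_Un_le)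
  also have "measure P ?G \<le> (\<integral>\<omega>. g \<omega> \<partial>P)"
    using integral_Markov_inequality_measure[OF assms(2) sets.top, of 1] assms(3) by simp
  also have "measure P (\<Union>i\<in>I. B i) \<le> (\<Sum>i\<in>I. measure P (B i))"
    using assms(4,5) by (intro measure_UNION_le) auto
  finally show ?thesis
    by simp
qed

lemma measure_Csq_dist_ge_le:
  fixes a b :: "'w \<Rightarrow> real \<times> real \<Rightarrow> real"
  assumes "0 < zeta" "prob_space P"
    and a_meas: "a \<in> measurable P (borel_of_metric (Csq zeta))"
    and b_meas: "b \<in> measurable P (borel_of_metric (Csq zeta))"
    and a_vals: "\<And>\<omega>. \<omega> \<in> space P \<Longrightarrow> a \<omega> \<in> Mps zeta"
    and b_vals: "\<And>\<omega>. \<omega> \<in> space P \<Longrightarrow> b \<omega> \<in> Mps zeta"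
    and le: "\<And>s t. s \<in> {0..zeta} \<Longrightarrow> t \<in> {0..zeta} \<Longrightarrow> AE \<omega> in P. b \<omega> (s, t) \<le> a \<omega> (s, t)"
    and g: "continuous_map (mtopology_of (Csq zeta)) euclideanreal g" "\<And>y. 0 \<le> g y" "\<And>y. g y \<le> 1"
      "\<And>y. y \<in> Csq_diag_osc zeta h c \<Longrightarrow> g y = 1"
    and G: "finite G" "G \<subseteq> {0..zeta}" "\<And>s. s \<in> {0..zeta} \<Longrightarrow> \<exists>p\<in>G. \<bar>s - p\<bar> \<le> h"
    and "0 \<le> c" "5 * c < \<delta>"
  shows "measure P {\<omega> \<in> space P. \<delta> \<le> mdist (Csq zeta) (b \<omega>) (a \<omega>)}
    \<le> (\<integral>\<omega>. g (a \<omega>) \<partial>P) + (\<Sum>pq\<in>G \<times> G. measure P {\<omega> \<in> space P. c < \<bar>b \<omega> pq - a \<omega> pq\<bar>})"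
proof (rule measure_le_integral_add_sum_of_AE_cover[OF assms(2)])
  interpret prob_space P
    by fact
  show "integrable P (\<lambda>\<omega>. g (a \<omega>))"
    using g(2,3) borel_measurable_continuous_map_comp[OF a_meas g(1)]
    by (intro integrable_const_bound[where B = 1] AE_I2) auto
  show "{\<omega> \<in> space P. c < \<bar>b \<omega> pq - a \<omega> pq\<bar>} \<in> sets P" if "pq \<in> G \<times> G" for pq
  proof -
    have "pq \<in> {0..zeta} \<times> {0..zeta}"
      using that G(2) by auto
    then have "(\<lambda>\<omega>. b \<omega> pq - a \<omega> pq) \<in> borel_measurable P"
      using borel_measurable_continuous_map_comp[OF b_meas continuous_map_Csq_eval]
        borel_measurable_continuous_map_comp[OF a_meas continuous_map_Csq_eval] by simp
    then show ?thesis
      by measurable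
  qed
  have "AE \<omega> in P. \<forall>z\<in>{0..zeta} \<times> {0..zeta}. b \<omega> z \<le> a \<omega> z"
    using a_vals b_vals le by (intro AE_Csq_le_if_AE_le[OF assms(1)]) (auto simp: Mps_def)
  with AE_space show "AE \<omega> in P. \<omega> \<in> {\<omega> \<in> space P. \<delta> \<le> mdist (Csq zeta) (b \<omega>) (a \<omega>)} \<longrightarrow>
      1 \<le> g (a \<omega>) \<or> (\<exists>pq\<in>G \<times> G. \<omega> \<in> {\<omega> \<in> space P. c < \<bar>b \<omega> pq - a \<omega> pq\<bar>})"
  proof eventually_elim
    case (elim \<omega>)
    have "mdist (Csq zeta) (b \<omega>) (a \<omega>) \<le> 5 * c"
      if "g (a \<omega>) < 1" "\<And>p q. p \<in> G \<Longrightarrow> q \<in> G \<Longrightarrow> \<bar>b \<omega> (p, q) - a \<omega> (p, q)\<bar> \<le> c"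
    proof (rule Mps_dist_le_of_net[OF a_vals b_vals _ G(2,3) _ that(2) \<open>0 \<le> c\<close>])
      have "a \<omega> \<notin> Csq_diag_osc zeta h c"
        using that(1) g(4) by force
      then show "a \<omega> (s, t) < c" if "s \<in> {0..zeta}" "t \<in> {0..zeta}" "\<bar>s - t\<bar> \<le> h" for s t
        using Mps_lt_if_not_Csq_diag_osc a_vals elim that by blast
    qed (use elim in auto)
    then show ?case
      using elim \<open>5 * c < \<delta>\<close> by (force simp: not_less)
  qed
qed (use G(1) g(2) in simp_all)

lemma Csq_mdist_tendsto_zero_in_prob:
  fixes zeta :: real
    and M :: "nat \<Rightarrow> 'w measure" and N :: "'v measure"
    and d dstar :: "nat \<Rightarrow> 'w \<Rightarrow> real \<times> real \<Rightarrow> real"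
    and dlim :: "'v \<Rightarrow> real \<times> real \<Rightarrow> real"
  assumes zeta: "0 < zeta"
    and probM: "\<And>n. prob_space (M n)" and probN: "prob_space N"
    and d_meas: "\<And>n. d n \<in> measurable (M n) (borel_of_metric (Csq zeta))"
    and dstar_meas: "\<And>n. dstar n \<in> measurable (M n) (borel_of_metric (Csq zeta))"
    and d_vals: "\<And>n \<omega>. \<omega> \<in> space (M n) \<Longrightarrow> d n \<omega> \<in> Mps zeta"
    and dstar_vals: "\<And>n \<omega>. \<omega> \<in> space (M n) \<Longrightarrow> dstar n \<omega> \<in> Mps zeta"
    and dlim_meas: "dlim \<in> measurable N (borel_of_metric (Csq zeta))"
    and conv: "weak_conv_metric (Csq zeta) M d N dlim"
    and le: "\<And>n s s'. s \<in> {0..zeta} \<Longrightarrow> s' \<in> {0..zeta} \<Longrightarrow>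
               AE \<omega> in M n. dstar n \<omega> (s, s') \<le> d n \<omega> (s, s')"
    and inprob: "\<And>s s' e. s \<in> {0..zeta} \<Longrightarrow> s' \<in> {0..zeta} \<Longrightarrow> 0 < e \<Longrightarrow>
               (\<lambda>n. measure (M n) {\<omega> \<in> space (M n). \<bar>dstar n \<omega> (s, s') - d n \<omega> (s, s')\<bar> > e})
                 \<longlonglongrightarrow> 0"
  shows "mdist_tendsto_zero_in_prob (Csq zeta) M dstar d"
  unfolding mdist_tendsto_zero_in_prob_def
proof (intro allI impI tendstoI)
  fix \<delta> \<epsilon> :: real assume "0 < \<delta>" "0 < \<epsilon>"
  define c where "c = \<delta> / 8"
  have "0 < c" "5 * c < \<delta>"
    using \<open>0 < \<delta>\<close> by (simp_all add: c_def)
  have far: "\<forall>\<^sub>F k in sequentially. \<forall>a\<in>Csq_diag_osc zeta (1 / real (Suc k)) c. c/4 \<le> mdist (Csq zeta) y a"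
    if "y \<in> mspace (Csq zeta)" for y
    using Csq_diag_osc_eventually_far[OF that \<open>0 < c\<close> LIMSEQ_Suc[OF lim_inverse_n']] .
  have "\<And>k. 0 < c/4" "\<And>k. Csq_diag_osc zeta (1 / real (Suc k)) c \<subseteq> mspace (Csq zeta)"
    using \<open>0 < c\<close> by (auto simp: Csq_diag_osc_def)
  then obtain k g where g: "continuous_map (mtopology_of (Csq zeta)) euclideanreal g"
      "\<And>y. 0 \<le> g y" "\<And>y. g y \<le> 1" "\<And>y. y \<in> Csq_diag_osc zeta (1 / real (Suc k)) c \<Longrightarrow> g y = 1"
    and small_g: "\<forall>\<^sub>F n in sequentially. (\<integral>\<omega>. g (d n \<omega>) \<partial>M n) < \<epsilon>/2"
    by (rule weak_conv_bump_eventually_small[OF probN dlim_meas conv _ _ far, of "\<epsilon>/2"])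
      (use \<open>0 < \<epsilon>\<close> in auto)
  obtain G where G: "finite G" "G \<subseteq> {0..zeta}" "\<And>s. s \<in> {0..zeta} \<Longrightarrow> \<exists>p\<in>G. \<bar>s - p\<bar> \<le> 1 / real (Suc k)"
    by (rule finite_net_atLeastAtMost[of "1 / real (Suc k)" 0 zeta]) auto
  define B where "B n pq = {\<omega> \<in> space (M n). c < \<bar>dstar n \<omega> pq - d n \<omega> pq\<bar>}" for n pq
  have "(\<lambda>n. \<Sum>pq\<in>G \<times> G. measure (M n) (B n pq)) \<longlonglongrightarrow> 0"
  proof (rule tendsto_null_sum)
    fix pq assume "pq \<in> G \<times> G"
    then obtain p q where "pq = (p, q)" "p \<in> {0..zeta}" "q \<in> {0..zeta}"
      using G(2) by blast
    then show "(\<lambda>n. measure (M n) (B n pq)) \<longlonglongrightarrow> 0"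
      unfolding B_def using inprob \<open>0 < c\<close> by simp
  qed
  from order_tendstoD(2)[OF this, of "\<epsilon>/2"]
  have small_B: "\<forall>\<^sub>F n in sequentially. (\<Sum>pq\<in>G \<times> G. measure (M n) (B n pq)) < \<epsilon>/2"
    using \<open>0 < \<epsilon>\<close> by simp
  from small_g small_B
  show "\<forall>\<^sub>F n in sequentially.
      dist (measure (M n) {\<omega> \<in> space (M n). \<delta> \<le> mdist (Csq zeta) (dstar n \<omega>) (d n \<omega>)}) 0 < \<epsilon>"
  proof eventually_elim
    case (elim n)
    have "measure (M n) {\<omega> \<in> space (M n). \<delta> \<le> mdist (Csq zeta) (dstar n \<omega>) (d n \<omega>)}
        \<le> (\<integral>\<omega>. g (d n \<omega>) \<partial>M n) + (\<Sum>pq\<in>G \<times> G. measure (M n) (B n pq))"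
      unfolding B_def
      by (rule measure_Csq_dist_ge_le[OF zeta probM d_meas dstar_meas d_vals dstar_vals le g G
            less_imp_le[OF \<open>0 < c\<close>] \<open>5 * c < \<delta>\<close>])
    then show ?case
      using elim by simp
  qed
qed

theorem proposition4p4:
  fixes zeta :: real
    and M :: "nat \<Rightarrow> 'w measure" and N :: "'v measure"
    and d dstar :: "nat \<Rightarrow> 'w \<Rightarrow> real \<times> real \<Rightarrow> real"
    and dlim :: "'v \<Rightarrow> real \<times> real \<Rightarrow> real"
  assumes zeta: "0 < zeta"
    and probM: "\<And>n. prob_space (M n)"
    and probN: "prob_space N"
    and d_meas: "\<And>n. d n \<in> measurable (M n) (borel_of_metric (Csq zeta))"
    and dstar_meas: "\<And>n. dstar n \<in> measurable (M n) (borel_of_metric (Csq zeta))"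
    and d_vals: "\<And>n \<omega>. \<omega> \<in> space (M n) \<Longrightarrow> d n \<omega> \<in> Mps zeta"
    and dstar_vals: "\<And>n \<omega>. \<omega> \<in> space (M n) \<Longrightarrow> dstar n \<omega> \<in> Mps zeta"
    and dlim_meas: "dlim \<in> measurable N (borel_of_metric (Csq zeta))"
    and dlim_vals: "\<And>\<omega>. \<omega> \<in> space N \<Longrightarrow> dlim \<omega> \<in> mspace (Csq zeta)"
    and conv: "weak_conv_metric (Csq zeta) M d N dlim"
    and le: "\<And>n s s'. s \<in> {0..zeta} \<Longrightarrow> s' \<in> {0..zeta} \<Longrightarrow>
               AE \<omega> in M n. dstar n \<omega> (s, s') \<le> d n \<omega> (s, s')"
    and inprob: "\<And>s s' e. s \<in> {0..zeta} \<Longrightarrow> s' \<in> {0..zeta} \<Longrightarrow> 0 < e \<Longrightarrow>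
               (\<lambda>n. measure (M n) {\<omega> \<in> space (M n). \<bar>dstar n \<omega> (s, s') - d n \<omega> (s, s')\<bar> > e})
                 \<longlonglongrightarrow> 0"
  shows "weak_conv_metric (prod_metric (Csq zeta) (Csq zeta)) M (\<lambda>n \<omega>. (dstar n \<omega>, d n \<omega>))
           N (\<lambda>\<omega>. (dlim \<omega>, dlim \<omega>))"
proof -
  have "mdist_tendsto_zero_in_prob (Csq zeta) M dstar d"
    by (rule Csq_mdist_tendsto_zero_in_prob[OF zeta probM probN d_meas dstar_meas d_vals dstar_vals
          dlim_meas conv le inprob])
  then show ?thesis
    by (rule weak_conv_pair_if_mdist_tendsto_zero_in_prob[OF probM probN Csq_separable dstar_meas d_meas
          dlim_meas conv])
qed

end
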